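(* Let $\mathcal{A}$ be an $n$-dimensional Hopf algebra over $\mathbb{C}$ (coproduct $\Delta$, counit $\varepsilon$, antipode $S$) with $S^2=\mathrm{id}$, let $\Pi_\phi$ be a representation of $\mathcal{A}$ on $V$ and $|\phi_r\rangle\in V$. Define $\mathcal{T}_r=\{a\in\mathcal{A}:(\mathrm{id}\otimes\Pi_\phi)\Delta(a)(1\otimes|\phi_r\rangle)=a\otimes|\phi_r\rangle\}$, $\mathcal{T}_l=\{a\in\mathcal{A}:(\Pi_\phi\otimes\mathrm{id})\Delta(a)(|\phi_r\rangle\otimes1)=|\phi_r\rangle\otimes a\}$, and let $\mathcal{T}$ be the largest Hopf subalgebra of $\mathcal{A}$ all of whose elements $a$ satisfy $\Pi_\phi(a)|\phi_r\rangle=\varepsilon(a)|\phi_r\rangle$. Then the following are equivalent: (1) $\mathcal{T}_r=\mathcal{T}_l$; (2) $\mathcal{T}_r$ is a Hopf subalgebra of $\mathcal{A}$; (3) $\mathcal{T}_r=\mathcal{T}$; (4) $\mathcal{T}_l\subseteq\mathcal{T}_r$.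
   Context: With $\Delta(a)=\sum a^{(1)}\otimes a^{(2)}$, $(\mathrm{id}\otimes\Pi_\phi)\Delta(a)(1\otimes|\phi_r\rangle)=\sum a^{(1)}\otimes\Pi_\phi(a^{(2)})|\phi_r\rangle\in\mathcal{A}\otimes V$ and $(\Pi_\phi\otimes\mathrm{id})\Delta(a)(|\phi_r\rangle\otimes1)=\sum \Pi_\phi(a^{(1)})|\phi_r\rangle\otimes a^{(2)}\in V\otimes\mathcal{A}$. A Hopf subalgebra is a subalgebra containing $1$, with $\Delta$ mapping it into its tensor square and $S$ mapping it into itself. *)

theory Defs
  imports Complex_Main
begin

text \<open>A finite-dimensional complex algebra A with basis indexed by the finite type 'n
  (so dim A = CARD('n)); elements of A are coordinate vectors 'n \<Rightarrow> complex.
  Elements of A \<otimes> A are 'n \<times> 'n \<Rightarrow> complex, elements of A \<otimes> A \<otimes> A are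
  'n \<times> 'n \<times> 'n \<Rightarrow> complex. The structure maps are given by structure constants
  w.r.t. the basis e_i:
    e_i e_j = \<Sum>_k mul i j k e_k,  1 = \<Sum>_k unit k e_k,
    \<Delta>(e_k) = \<Sum>_{i,j} comul k i j e_i \<otimes> e_j,  \<epsilon>(e_k) = counit k,
    S(e_k) = \<Sum>_j antip k j e_j.\<close>

record 'n hopf_data =
  hmul :: "'n \<Rightarrow> 'n \<Rightarrow> 'n \<Rightarrow> complex"
  hunit :: "'n \<Rightarrow> complex"
  hcomul :: "'n \<Rightarrow> 'n \<Rightarrow> 'n \<Rightarrow> complex"
  hcounit :: "'n \<Rightarrow> complex"
  hantip :: "'n \<Rightarrow> 'n \<Rightarrow> complex"

definition bas :: "'n \<Rightarrow> 'n \<Rightarrow> complex" where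
  "bas i = (\<lambda>j. if i = j then 1 else 0)"

definition amult :: "('n::finite) hopf_data \<Rightarrow> ('n \<Rightarrow> complex) \<Rightarrow> ('n \<Rightarrow> complex) \<Rightarrow> ('n \<Rightarrow> complex)" where
  "amult H a b = (\<lambda>k. \<Sum>i\<in>UNIV. \<Sum>j\<in>UNIV. a i * b j * hmul H i j k)"

definition aone :: "('n::finite) hopf_data \<Rightarrow> ('n \<Rightarrow> complex)" where
  "aone H = hunit H"

definition aDelta :: "('n::finite) hopf_data \<Rightarrow> ('n \<Rightarrow> complex) \<Rightarrow> ('n \<times> 'n \<Rightarrow> complex)" where
  "aDelta H a = (\<lambda>(i,j). \<Sum>k\<in>UNIV. a k * hcomul H k i j)"

definition aeps :: "('n::finite) hopf_data \<Rightarrow> ('n \<Rightarrow> complex) \<Rightarrow> complex" where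
  "aeps H a = (\<Sum>k\<in>UNIV. a k * hcounit H k)"

definition aS :: "('n::finite) hopf_data \<Rightarrow> ('n \<Rightarrow> complex) \<Rightarrow> ('n \<Rightarrow> complex)" where
  "aS H a = (\<lambda>j. \<Sum>k\<in>UNIV. a k * hantip H k j)"

definition tens :: "('n \<Rightarrow> complex) \<Rightarrow> ('n \<Rightarrow> complex) \<Rightarrow> ('n \<times> 'n \<Rightarrow> complex)" where
  "tens a b = (\<lambda>(i,j). a i * b j)"

text \<open>Multiplication of A \<otimes> A: (e_i \<otimes> e_j)(e_p \<otimes> e_q) = e_i e_p \<otimes> e_j e_q.\<close>
definition tmult :: "('n::finite) hopf_data \<Rightarrow> ('n \<times> 'n \<Rightarrow> complex) \<Rightarrow> ('n \<times> 'n \<Rightarrow> complex) \<Rightarrow> ('n \<times> 'n \<Rightarrow> complex)" where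
  "tmult H x y = (\<lambda>(p,q). \<Sum>i\<in>UNIV. \<Sum>j\<in>UNIV. \<Sum>i'\<in>UNIV. \<Sum>j'\<in>UNIV.
      x (i,j) * y (i',j') * hmul H i i' p * hmul H j j' q)"

definition Delta_id :: "('n::finite) hopf_data \<Rightarrow> ('n \<times> 'n \<Rightarrow> complex) \<Rightarrow> ('n \<times> 'n \<times> 'n \<Rightarrow> complex)" where
  "Delta_id H x = (\<lambda>(i,j,l). \<Sum>k\<in>UNIV. x (k,l) * hcomul H k i j)"

definition id_Delta :: "('n::finite) hopf_data \<Rightarrow> ('n \<times> 'n \<Rightarrow> complex) \<Rightarrow> ('n \<times> 'n \<times> 'n \<Rightarrow> complex)" where
  "id_Delta H x = (\<lambda>(i,j,l). \<Sum>k\<in>UNIV. x (i,k) * hcomul H k j l)"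

definition eps_id :: "('n::finite) hopf_data \<Rightarrow> ('n \<times> 'n \<Rightarrow> complex) \<Rightarrow> ('n \<Rightarrow> complex)" where
  "eps_id H x = (\<lambda>j. \<Sum>i\<in>UNIV. hcounit H i * x (i,j))"

definition id_eps :: "('n::finite) hopf_data \<Rightarrow> ('n \<times> 'n \<Rightarrow> complex) \<Rightarrow> ('n \<Rightarrow> complex)" where
  "id_eps H x = (\<lambda>i. \<Sum>j\<in>UNIV. x (i,j) * hcounit H j)"

definition mult_S_id :: "('n::finite) hopf_data \<Rightarrow> ('n \<times> 'n \<Rightarrow> complex) \<Rightarrow> ('n \<Rightarrow> complex)" where
  "mult_S_id H x = (\<lambda>k. \<Sum>i\<in>UNIV. \<Sum>j\<in>UNIV. x (i,j) * amult H (aS H (bas i)) (bas j) k)"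

definition mult_id_S :: "('n::finite) hopf_data \<Rightarrow> ('n \<times> 'n \<Rightarrow> complex) \<Rightarrow> ('n \<Rightarrow> complex)" where
  "mult_id_S H x = (\<lambda>k. \<Sum>i\<in>UNIV. \<Sum>j\<in>UNIV. x (i,j) * amult H (bas i) (aS H (bas j)) k)"

definition hopf_algebra :: "('n::finite) hopf_data \<Rightarrow> bool" where
  "hopf_algebra H \<longleftrightarrow>
     (\<forall>a b c. amult H (amult H a b) c = amult H a (amult H b c)) \<and>
     (\<forall>a. amult H (aone H) a = a \<and> amult H a (aone H) = a) \<and>
     (\<forall>a. Delta_id H (aDelta H a) = id_Delta H (aDelta H a)) \<and>
     (\<forall>a. eps_id H (aDelta H a) = a \<and> id_eps H (aDelta H a) = a) \<and>
     (\<forall>a b. aDelta H (amult H a b) = tmult H (aDelta H a) (aDelta H b)) \<and>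
     aDelta H (aone H) = tens (aone H) (aone H) \<and>
     (\<forall>a b. aeps H (amult H a b) = aeps H a * aeps H b) \<and>
     aeps H (aone H) = 1 \<and>
     (\<forall>a. mult_S_id H (aDelta H a) = (\<lambda>k. aeps H a * aone H k) \<and>
          mult_id_S H (aDelta H a) = (\<lambda>k. aeps H a * aone H k))"

text \<open>Representations of A on a complex vector space V (type 'v, scalar
  multiplication sc): given by the operators rep i = \<Pi>(e_i);
  \<Pi>(a) v = \<Sum>_i a_i \<Pi>(e_i) v.\<close>
definition Pi_rep :: "(complex \<Rightarrow> 'v \<Rightarrow> 'v) \<Rightarrow> ('n::finite \<Rightarrow> 'v \<Rightarrow> 'v) \<Rightarrow> ('n \<Rightarrow> complex) \<Rightarrow> 'v \<Rightarrow> ('v::ab_group_add)" where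
  "Pi_rep sc rep a v = (\<Sum>i\<in>UNIV. sc (a i) (rep i v))"

definition is_rep :: "('n::finite) hopf_data \<Rightarrow> (complex \<Rightarrow> 'v \<Rightarrow> 'v) \<Rightarrow> ('n \<Rightarrow> 'v \<Rightarrow> ('v::ab_group_add)) \<Rightarrow> bool" where
  "is_rep H sc rep \<longleftrightarrow>
     vector_space sc \<and>
     (\<forall>i. Vector_Spaces.linear sc sc (rep i)) \<and>
     (\<forall>v. Pi_rep sc rep (aone H) v = v) \<and>
     (\<forall>a b v. Pi_rep sc rep (amult H a b) v = Pi_rep sc rep a (Pi_rep sc rep b v))"

text \<open>Elements of A \<otimes> V and of V \<otimes> A are both identified with 'n \<Rightarrow> 'v:
  the component at i is the V-coefficient of e_i.\<close>
definition T_r :: "('n::finite) hopf_data \<Rightarrow> (complex \<Rightarrow> 'v \<Rightarrow> 'v) \<Rightarrow> ('n \<Rightarrow> 'v \<Rightarrow> ('v::ab_group_add)) \<Rightarrow> 'v \<Rightarrow> ('n \<Rightarrow> complex) set" where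
  "T_r H sc rep phi = {a. (\<lambda>i. \<Sum>j\<in>UNIV. sc (aDelta H a (i,j)) (Pi_rep sc rep (bas j) phi))
                          = (\<lambda>i. sc (a i) phi)}"

definition T_l :: "('n::finite) hopf_data \<Rightarrow> (complex \<Rightarrow> 'v \<Rightarrow> 'v) \<Rightarrow> ('n \<Rightarrow> 'v \<Rightarrow> ('v::ab_group_add)) \<Rightarrow> 'v \<Rightarrow> ('n \<Rightarrow> complex) set" where
  "T_l H sc rep phi = {a. (\<lambda>j. \<Sum>i\<in>UNIV. sc (aDelta H a (i,j)) (Pi_rep sc rep (bas i) phi))
                          = (\<lambda>j. sc (a j) phi)}"

definition tensor_sq :: "('n \<Rightarrow> complex) set \<Rightarrow> ('n \<times> 'n \<Rightarrow> complex) set" where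
  "tensor_sq B = {x. \<exists>(m::nat) c f g. (\<forall>l<m. f l \<in> B \<and> g l \<in> B) \<and>
                      x = (\<lambda>p. \<Sum>l<m. c l * tens (f l) (g l) p)}"

definition subalgebra :: "('n::finite) hopf_data \<Rightarrow> ('n \<Rightarrow> complex) set \<Rightarrow> bool" where
  "subalgebra H B \<longleftrightarrow>
     (\<lambda>_. 0) \<in> B \<and>
     (\<forall>a\<in>B. \<forall>b\<in>B. (\<lambda>i. a i + b i) \<in> B) \<and>
     (\<forall>c. \<forall>a\<in>B. (\<lambda>i. c * a i) \<in> B) \<and>
     aone H \<in> B \<and>
     (\<forall>a\<in>B. \<forall>b\<in>B. amult H a b \<in> B)"

definition hopf_subalgebra :: "('n::finite) hopf_data \<Rightarrow> ('n \<Rightarrow> complex) set \<Rightarrow> bool" where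
  "hopf_subalgebra H B \<longleftrightarrow>
     subalgebra H B \<and>
     (\<forall>a\<in>B. aDelta H a \<in> tensor_sq B) \<and>
     (\<forall>a\<in>B. aS H a \<in> B)"

definition stabilizes :: "('n::finite) hopf_data \<Rightarrow> (complex \<Rightarrow> 'v \<Rightarrow> 'v) \<Rightarrow> ('n \<Rightarrow> 'v \<Rightarrow> ('v::ab_group_add)) \<Rightarrow> 'v \<Rightarrow> ('n \<Rightarrow> complex) set \<Rightarrow> bool" where
  "stabilizes H sc rep phi B \<longleftrightarrow> (\<forall>a\<in>B. Pi_rep sc rep a phi = sc (aeps H a) phi)"

definition is_largest_stab_hopf :: "('n::finite) hopf_data \<Rightarrow> (complex \<Rightarrow> 'v \<Rightarrow> 'v) \<Rightarrow> ('n \<Rightarrow> 'v \<Rightarrow> ('v::ab_group_add)) \<Rightarrow> 'v \<Rightarrow> ('n \<Rightarrow> complex) set \<Rightarrow> bool" where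
  "is_largest_stab_hopf H sc rep phi T \<longleftrightarrow>
     hopf_subalgebra H T \<and> stabilizes H sc rep phi T \<and>
     (\<forall>B. hopf_subalgebra H B \<and> stabilizes H sc rep phi B \<longrightarrow> B \<subseteq> T)"

end

theory Submission
  imports Defs "HOL-Library.Function_Algebras"
begin

text \<open>
  Write a(1) \<otimes> a(2) for \<Delta>(a). Because m(S \<otimes> id)\<Delta> = m(id \<otimes> S)\<Delta> = \<eta>\<epsilon>, and because the
  condition a(1) \<otimes> \<Pi>(g(a(2)))\<phi> = a \<otimes> \<phi> passes to the rows of \<Delta>(a) by coassociativity, the
  set T_r is unchanged when \<Pi>(a(2)) is replaced by \<Pi>(S a(2)) in its definition. The antipode
  reverses the coproduct, \<Delta>(S a) = S a(2) \<otimes> S a(1), and is invertible since S^2 = id; so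
  this second description says precisely that S a \<in> T_l. Hence S maps T_r onto T_l and T_l onto
  T_r, and T_l \<subseteq> T_r, T_r = T_l and S(T_r) \<subseteq> T_r are equivalent.

  On the other hand T_r is always a subalgebra on which \<Pi>(a)\<phi> = \<epsilon>(a)\<phi>, and it contains every
  Hopf subalgebra with this property. If T_r = T_l, the rows and the columns of \<Delta>(a) lie in T_r,
  so \<Delta>(T_r) \<subseteq> T_r \<otimes> T_r and T_r is a Hopf subalgebra. Therefore T_r is a Hopf subalgebra
  exactly when it equals T, and then it is closed under S.
\<close>

section \<open>Multiplication of A \<otimes> A\<close>

lemma sum_mult_bas [simp]:
  "(\<Sum>j\<in>UNIV. f j * bas (i::'n::finite) j) = (f i :: complex)"
  "(\<Sum>j\<in>UNIV. f j * bas j i) = f i"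
  "(\<Sum>j\<in>UNIV. bas i j * f j) = f i"
  "(\<Sum>j\<in>UNIV. bas j i * f j) = f i"
  by (simp_all add: bas_def if_distrib[of "\<lambda>z. z * _"] if_distrib[of "\<lambda>z. _ * z"] cong: if_cong)

lemma aDelta_bas: "aDelta H (bas t) (i, j) = hcomul H t i j"
  by (simp add: aDelta_def)

lemma aS_bas: "aS H (bas t) = hantip H t"
  by (simp add: aS_def fun_eq_iff)

lemma aeps_bas: "aeps H (bas t) = hcounit H t"
  by (simp add: aeps_def)

lemma tens_apply [simp]: "tens a b (p, q) = a p * b q"
  by (simp add: tens_def)

lemma aDelta_sum: "aDelta H (\<lambda>k. \<Sum>i\<in>I. f i k) = (\<lambda>pq. \<Sum>i\<in>I. aDelta H (f i) pq)"
  by (simp add: fun_eq_iff aDelta_def sum_distrib_right sum.swap[of _ I])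

lemma aDelta_scale: "aDelta H (\<lambda>k. c * f k) = (\<lambda>pq. c * aDelta H f pq)"
  by (simp add: fun_eq_iff aDelta_def sum_distrib_left mult.assoc)

lemma tensor_expand: "(x :: ('n::finite) \<times> 'n \<Rightarrow> complex) = (\<lambda>pq. \<Sum>i\<in>UNIV. \<Sum>j\<in>UNIV. x (i, j) * tens (bas i) (bas j) pq)"
  by (simp add: fun_eq_iff tens_def mult.assoc[symmetric])

lemma aDelta_bas_expand: "aDelta H (bas i) = (\<lambda>pq. \<Sum>a\<in>UNIV. \<Sum>b\<in>UNIV. hcomul H i a b * tens (bas a) (bas b) pq)"
  by (subst tensor_expand) (simp add: aDelta_bas)

lemma tmult_sum_left:
  "tmult H (\<lambda>pq. \<Sum>k\<in>K. x k pq) y = (\<lambda>pq. \<Sum>k\<in>K. tmult H (x k) y pq)"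
  by (simp add: fun_eq_iff tmult_def sum_distrib_right sum.swap[of _ K])

lemma tmult_sum_right:
  "tmult H x (\<lambda>pq. \<Sum>k\<in>K. y k pq) = (\<lambda>pq. \<Sum>k\<in>K. tmult H x (y k) pq)"
  by (simp add: fun_eq_iff tmult_def sum_distrib_left sum_distrib_right sum.swap[of _ K])

lemma tmult_scale_left: "tmult H (\<lambda>pq. c * x pq) y = (\<lambda>pq. c * tmult H x y pq)"
  by (simp add: fun_eq_iff tmult_def sum_distrib_left mult_ac)

lemma tmult_scale_right: "tmult H x (\<lambda>pq. c * y pq) = (\<lambda>pq. c * tmult H x y pq)"
  by (simp add: fun_eq_iff tmult_def sum_distrib_left mult_ac)

lemma tmult_tens: "tmult H (tens a b) (tens a' b') = tens (amult H a a') (amult H b b')"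
proof -
  have "(\<Sum>i\<in>UNIV. \<Sum>j\<in>UNIV. \<Sum>i'\<in>UNIV. \<Sum>j'\<in>UNIV. a i * b j * (a' i' * b' j') * hmul H i i' p * hmul H j j' q)
      = (\<Sum>i\<in>UNIV. \<Sum>i'\<in>UNIV. a i * a' i' * hmul H i i' p) * (\<Sum>j\<in>UNIV. \<Sum>j'\<in>UNIV. b j * b' j' * hmul H j j' q)"
    for p q
    unfolding sum_distrib_right unfolding sum_distrib_left
    by (rule sum.cong[OF refl], rule trans[OF sum.swap]) (simp add: mult_ac)
  then show ?thesis
    by (simp add: fun_eq_iff tmult_def tens_def amult_def)
qed

lemma tmult_row:
  "tmult H x y (i, j) = (\<Sum>p\<in>UNIV. \<Sum>p'\<in>UNIV. hmul H p p' i * amult H (\<lambda>q. x (p, q)) (\<lambda>q. y (p', q)) j)"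
  unfolding tmult_def amult_def split sum_distrib_left
  by (rule sum.cong[OF refl], rule trans[OF sum.swap]) (simp add: mult_ac)

lemma
  fixes H :: "('n::finite) hopf_data"
  assumes assoc: "\<And>a b c. amult H (amult H a b) c = amult H a (amult H b c)"
  shows tmult_assoc: "tmult H (tmult H x y) z = tmult H x (tmult H y z)"
proof -
  define expand :: "('n \<times> 'n \<Rightarrow> complex) \<Rightarrow> 'n \<times> 'n \<Rightarrow> complex" where
    "expand w = (\<lambda>pq. \<Sum>i\<in>UNIV. \<Sum>j\<in>UNIV. w (i, j) * tens (bas i) (bas j) pq)" for w
  have "tmult H (tmult H (expand x) (expand y)) (expand z) = tmult H (expand x) (tmult H (expand y) (expand z))"
    unfolding expand_def tmult_sum_left tmult_sum_right tmult_scale_left tmult_scale_right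
    by (simp add: tmult_tens assoc)
  then show ?thesis
    by (simp only: expand_def tensor_expand[symmetric])
qed

lemma
  fixes H :: "('n::finite) hopf_data"
  assumes unit: "\<And>a. amult H (aone H) a = a" "\<And>a. amult H a (aone H) = a"
  shows tmult_one_left: "tmult H (tens (aone H) (aone H)) x = x"
    and tmult_one_right: "tmult H x (tens (aone H) (aone H)) = x"
proof -
  define expand :: "('n \<times> 'n \<Rightarrow> complex) \<Rightarrow> 'n \<times> 'n \<Rightarrow> complex" where
    "expand w = (\<lambda>pq. \<Sum>i\<in>UNIV. \<Sum>j\<in>UNIV. w (i, j) * tens (bas i) (bas j) pq)" for w
  have "tmult H (tens (aone H) (aone H)) (expand x) = expand x"
    and "tmult H (expand x) (tens (aone H) (aone H)) = expand x"
    unfolding expand_def tmult_sum_left tmult_sum_right tmult_scale_left tmult_scale_right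
    by (simp_all add: tmult_tens unit)
  then show "tmult H (tens (aone H) (aone H)) x = x" and "tmult H x (tens (aone H) (aone H)) = x"
    by (simp_all only: expand_def tensor_expand[symmetric])
qed

section \<open>Elements of B \<otimes> B\<close>

definition scale_fun :: "complex \<Rightarrow> ('n \<Rightarrow> complex) \<Rightarrow> 'n \<Rightarrow> complex" where
  "scale_fun c f = (\<lambda>i. c * f i)"

lemma vector_space_scale_fun: "vector_space scale_fun"
  by unfold_locales (auto simp: scale_fun_def fun_eq_iff algebra_simps)

lemma sum_fun_apply: "(\<Sum>a\<in>A. h a) x = (\<Sum>a\<in>A. h a x)"
  by (induct A rule: infinite_finite_induct) auto

lemma linear_scale_fun_apply:
  assumes "Vector_Spaces.linear scale_fun scale_fun g"
  shows "g (f :: 'n::finite \<Rightarrow> complex) q = (\<Sum>j\<in>UNIV. f j * g (bas j) q)"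
proof -
  interpret module_hom scale_fun scale_fun g
    using assms by (simp add: module_hom_iff_linear)
  have "f = (\<Sum>j\<in>UNIV. scale_fun (f j) (bas j))"
    by (rule ext) (simp add: sum_fun_apply scale_fun_def)
  then have "g f = g (\<Sum>j\<in>UNIV. scale_fun (f j) (bas j))"
    by (rule arg_cong)
  also have "\<dots> = (\<Sum>j\<in>UNIV. scale_fun (f j) (g (bas j)))"
    by (simp add: sum scale)
  finally have "g f = (\<Sum>j\<in>UNIV. scale_fun (f j) (g (bas j)))" .
  then show ?thesis
    by (simp add: scale_fun_def sum_fun_apply)
qed

lemma mem_tensor_sq_of_rows_cols:
  fixes x :: "('n::finite) \<times> 'n \<Rightarrow> complex"
  assumes zero: "(\<lambda>_. 0) \<in> B"
    and add: "\<forall>a\<in>B. \<forall>b\<in>B. (\<lambda>i. a i + b i) \<in> B"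
    and scale: "\<forall>c. \<forall>a\<in>B. (\<lambda>i. c * a i) \<in> B"
    and rows: "\<And>i. (\<lambda>j. x (i, j)) \<in> B"
    and cols: "\<And>j. (\<lambda>i. x (i, j)) \<in> B"
  shows "x \<in> tensor_sq B"
proof -
  have "module.subspace scale_fun B"
    using zero add scale
    unfolding module.subspace_def[OF vector_space_scale_fun[unfolded module_iff_vector_space[symmetric]]]
    by (auto simp: scale_fun_def zero_fun_def plus_fun_def)
  moreover have "vector_space_pair scale_fun scale_fun"
    by (simp add: vector_space_pair_def vector_space_scale_fun)
  moreover have "Vector_Spaces.linear scale_fun scale_fun id"
    by (simp add: vector_space.linear_id vector_space_scale_fun)
  ultimately obtain g where g_range: "range g \<subseteq> B" and g_linear: "Vector_Spaces.linear scale_fun scale_fun g"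
    and g_id: "\<forall>v\<in>B. g v = v"
    using vector_space_pair.linear_exists_left_inverse_on[of scale_fun scale_fun id B] by auto
  \<comment> \<open>a projection onto B turns the row and column conditions into x = \<Sum> x(i,j) g(e_i) \<otimes> g(e_j)\<close>
  have expand: "x (p, q) = (\<Sum>ij\<in>UNIV. x ij * tens (g (bas (fst ij))) (g (bas (snd ij))) (p, q))" for p q
  proof -
    have "x (p, q) = g (\<lambda>j. x (p, j)) q"
      using g_id rows by simp
    also have "\<dots> = (\<Sum>j\<in>UNIV. x (p, j) * g (bas j) q)"
      by (rule linear_scale_fun_apply[OF g_linear])
    also have "\<dots> = (\<Sum>j\<in>UNIV. g (\<lambda>i. x (i, j)) p * g (bas j) q)"
      using g_id cols by simp
    also have "\<dots> = (\<Sum>j\<in>UNIV. \<Sum>i\<in>UNIV. x (i, j) * g (bas i) p * g (bas j) q)"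
      by (simp only: linear_scale_fun_apply[OF g_linear, of "\<lambda>i. x (i, _)" p] sum_distrib_right)
    also have "\<dots> = (\<Sum>ij\<in>UNIV. x ij * tens (g (bas (fst ij))) (g (bas (snd ij))) (p, q))"
      by (subst sum.swap) (simp add: sum.cartesian_product mult.assoc split_def flip: UNIV_Times_UNIV)
    finally show ?thesis .
  qed
  obtain h :: "nat \<Rightarrow> 'n \<times> 'n" where h: "bij_betw h {..<card (UNIV :: ('n \<times> 'n) set)} UNIV"
    using ex_bij_betw_nat_finite[of "UNIV :: ('n \<times> 'n) set"] by (auto simp: atLeast0LessThan)
  have "x = (\<lambda>pq. \<Sum>l<card (UNIV :: ('n \<times> 'n) set). x (h l) * tens (g (bas (fst (h l)))) (g (bas (snd (h l)))) pq)"
  proof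
    fix pq :: "'n \<times> 'n"
    show "x pq = (\<Sum>l<card (UNIV :: ('n \<times> 'n) set). x (h l) * tens (g (bas (fst (h l)))) (g (bas (snd (h l)))) pq)"
      using expand[of "fst pq" "snd pq"]
        sum.reindex_bij_betw[OF h, of "\<lambda>ij. x ij * tens (g (bas (fst ij))) (g (bas (snd ij))) pq"]
      by simp
  qed
  moreover have "g (bas (fst (h l))) \<in> B \<and> g (bas (snd (h l))) \<in> B" for l
    using g_range by auto
  ultimately show ?thesis
    unfolding tensor_sq_def
    by (intro CollectI exI[of _ "card (UNIV :: ('n \<times> 'n) set)"] exI[of _ "\<lambda>l. x (h l)"]
        exI[of _ "\<lambda>l. g (bas (fst (h l)))"] exI[of _ "\<lambda>l. g (bas (snd (h l)))"]) simp
qed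

section \<open>The antipode reverses the coproduct\<close>

text \<open>Convolution in Hom(A, A \<otimes> A), a linear map being given by its values on the basis
  vectors; conv_tensor_unit is \<eta>\<epsilon> and antipode_Delta_op is (S \<otimes> S) \<circ> \<Delta>^op.\<close>

definition conv_tensor :: "('n::finite) hopf_data \<Rightarrow> ('n \<Rightarrow> 'n \<times> 'n \<Rightarrow> complex) \<Rightarrow> ('n \<Rightarrow> 'n \<times> 'n \<Rightarrow> complex) \<Rightarrow> 'n \<Rightarrow> 'n \<times> 'n \<Rightarrow> complex" where
  "conv_tensor H X Y t = (\<lambda>pq. \<Sum>i\<in>UNIV. \<Sum>j\<in>UNIV. hcomul H t i j * tmult H (X i) (Y j) pq)"

definition conv_tensor_unit :: "('n::finite) hopf_data \<Rightarrow> 'n \<Rightarrow> 'n \<times> 'n \<Rightarrow> complex" where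
  "conv_tensor_unit H t = (\<lambda>pq. hcounit H t * tens (aone H) (aone H) pq)"

definition antipode_Delta_op :: "('n::finite) hopf_data \<Rightarrow> 'n \<Rightarrow> 'n \<times> 'n \<Rightarrow> complex" where
  "antipode_Delta_op H t =
     (\<lambda>pq. \<Sum>x\<in>UNIV. \<Sum>y\<in>UNIV. hcomul H t x y * tens (hantip H y) (hantip H x) pq)"

text \<open>For the linear maps g, f of A with g(e_i) = G i and f(e_j) = F j, this says g * f = \<eta>\<epsilon>
  in the convolution algebra of A.\<close>

definition convolution_inverse :: "('n::finite) hopf_data \<Rightarrow> ('n \<Rightarrow> 'n \<Rightarrow> complex) \<Rightarrow> ('n \<Rightarrow> 'n \<Rightarrow> complex) \<Rightarrow> bool" where
  "convolution_inverse H G F \<longleftrightarrow>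
     (\<forall>a k. (\<Sum>i\<in>UNIV. \<Sum>j\<in>UNIV. aDelta H a (i, j) * amult H (G i) (F j) k) = aeps H a * aone H k)"

context
  fixes H :: "('n::finite) hopf_data"
  assumes hopf: "hopf_algebra H"
begin

lemma amult_assoc: "amult H (amult H a b) c = amult H a (amult H b c)"
  using hopf by (simp add: hopf_algebra_def)

lemma amult_one_left: "amult H (aone H) a = a"
  and amult_one_right: "amult H a (aone H) = a"
  using hopf by (simp_all add: hopf_algebra_def)

lemma aDelta_amult: "aDelta H (amult H a b) = tmult H (aDelta H a) (aDelta H b)"
  using hopf by (simp add: hopf_algebra_def)

lemma aDelta_one: "aDelta H (aone H) = tens (aone H) (aone H)"
  using hopf by (simp add: hopf_algebra_def)

lemma aDelta_coassoc:
  "(\<Sum>k\<in>UNIV. aDelta H a (k, l) * hcomul H k i j) = (\<Sum>k\<in>UNIV. aDelta H a (i, k) * hcomul H k j l)"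
proof -
  have "Delta_id H (aDelta H a) (i, j, l) = id_Delta H (aDelta H a) (i, j, l)"
    using hopf by (simp add: hopf_algebra_def)
  then show ?thesis
    by (simp add: Delta_id_def id_Delta_def)
qed

lemma hcomul_coassoc:
  "(\<Sum>k\<in>UNIV. hcomul H t k l * hcomul H k i j) = (\<Sum>k\<in>UNIV. hcomul H t i k * hcomul H k j l)"
  using aDelta_coassoc[of "bas t"] by (simp add: aDelta_bas)

lemma aDelta_counit_left: "(\<Sum>i\<in>UNIV. hcounit H i * aDelta H a (i, j)) = a j"
proof -
  have "eps_id H (aDelta H a) = a"
    using hopf by (simp add: hopf_algebra_def)
  then show ?thesis
    by (simp add: eps_id_def fun_eq_iff)
qed

lemma aDelta_counit_right: "(\<Sum>j\<in>UNIV. aDelta H a (i, j) * hcounit H j) = a i"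
proof -
  have "id_eps H (aDelta H a) = a"
    using hopf by (simp add: hopf_algebra_def)
  then show ?thesis
    by (simp add: id_eps_def fun_eq_iff)
qed

lemma antipode_left:
  "(\<Sum>i\<in>UNIV. \<Sum>j\<in>UNIV. aDelta H a (i, j) * amult H (hantip H i) (bas j) k) = aeps H a * aone H k"
proof -
  have "mult_S_id H (aDelta H a) k = aeps H a * aone H k"
    using hopf by (simp add: hopf_algebra_def)
  then show ?thesis
    by (simp add: mult_S_id_def aS_bas)
qed

lemma antipode_right:
  "(\<Sum>i\<in>UNIV. \<Sum>j\<in>UNIV. aDelta H a (i, j) * amult H (bas i) (hantip H j) k) = aeps H a * aone H k"
proof -
  have "mult_id_S H (aDelta H a) k = aeps H a * aone H k"
    using hopf by (simp add: hopf_algebra_def)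
  then show ?thesis
    by (simp add: mult_id_S_def aS_bas)
qed

lemma convolution_inverse_antipode_id: "convolution_inverse H (hantip H) bas"
  by (simp add: convolution_inverse_def antipode_left)

lemma convolution_inverse_id_antipode: "convolution_inverse H bas (hantip H)"
  by (simp add: convolution_inverse_def antipode_right)

lemma coassoc_sweedler:
  "(\<Sum>i\<in>UNIV. \<Sum>j\<in>UNIV. hcomul H t i j * (\<Sum>a\<in>UNIV. \<Sum>b\<in>UNIV. hcomul H i a b * F a b j))
 = (\<Sum>a\<in>UNIV. \<Sum>w\<in>UNIV. hcomul H t a w * (\<Sum>b\<in>UNIV. \<Sum>j\<in>UNIV. hcomul H w b j * F a b j))"
proof -
  have "(\<Sum>i\<in>UNIV. \<Sum>j\<in>UNIV. hcomul H t i j * (\<Sum>a\<in>UNIV. \<Sum>b\<in>UNIV. hcomul H i a b * F a b j))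
      = (\<Sum>a\<in>UNIV. \<Sum>b\<in>UNIV. \<Sum>j\<in>UNIV. \<Sum>i\<in>UNIV. hcomul H t i j * hcomul H i a b * F a b j)"
    unfolding sum_distrib_left mult.assoc sum.cartesian_product UNIV_Times_UNIV
    by (rule sum.reindex_bij_witness[of _ "\<lambda>(a, b, j, i). (i, j, a, b)" "\<lambda>(i, j, a, b). (a, b, j, i)"]) auto
  also have "\<dots> = (\<Sum>a\<in>UNIV. \<Sum>b\<in>UNIV. \<Sum>j\<in>UNIV. \<Sum>w\<in>UNIV. hcomul H t a w * hcomul H w b j * F a b j)"
    by (simp only: sum_distrib_right[symmetric] hcomul_coassoc)
  also have "\<dots> = (\<Sum>a\<in>UNIV. \<Sum>w\<in>UNIV. hcomul H t a w * (\<Sum>b\<in>UNIV. \<Sum>j\<in>UNIV. hcomul H w b j * F a b j))"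
    unfolding sum_distrib_left mult.assoc sum.cartesian_product UNIV_Times_UNIV
    by (rule sum.reindex_bij_witness[of _ "\<lambda>(a, w, b, j). (a, b, j, w)" "\<lambda>(a, b, j, w). (a, w, b, j)"]) auto
  finally show ?thesis .
qed

lemma counit_sweedler_left: "(\<Sum>i\<in>UNIV. \<Sum>j\<in>UNIV. hcomul H t i j * (hcounit H i * F j)) = F t"
proof -
  have "(\<Sum>i\<in>UNIV. \<Sum>j\<in>UNIV. hcomul H t i j * (hcounit H i * F j))
      = (\<Sum>j\<in>UNIV. (\<Sum>i\<in>UNIV. hcounit H i * aDelta H (bas t) (i, j)) * F j)"
    by (subst sum.swap) (simp add: aDelta_bas sum_distrib_left sum_distrib_right mult_ac)
  then show ?thesis
    by (simp add: aDelta_counit_left)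
qed

lemma counit_sweedler_right: "(\<Sum>i\<in>UNIV. \<Sum>j\<in>UNIV. hcomul H t i j * (hcounit H j * F i)) = F t"
proof -
  have "(\<Sum>i\<in>UNIV. \<Sum>j\<in>UNIV. hcomul H t i j * (hcounit H j * F i))
      = (\<Sum>i\<in>UNIV. (\<Sum>j\<in>UNIV. aDelta H (bas t) (i, j) * hcounit H j) * F i)"
    by (simp add: aDelta_bas sum_distrib_left sum_distrib_right mult_ac)
  then show ?thesis
    by (simp add: aDelta_counit_right)
qed

lemma antipode_left_bas:
  "(\<Sum>i\<in>UNIV. \<Sum>j\<in>UNIV. hcomul H t i j * amult H (hantip H i) (bas j) k) = hcounit H t * aone H k"
  using antipode_left[of "bas t"] by (simp add: aDelta_bas aeps_bas)

lemma antipode_right_bas: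
  "(\<Sum>i\<in>UNIV. \<Sum>j\<in>UNIV. hcomul H t i j * amult H (bas i) (hantip H j) k) = hcounit H t * aone H k"
  using antipode_right[of "bas t"] by (simp add: aDelta_bas aeps_bas)

lemma conv_tensor_assoc: "conv_tensor H (conv_tensor H X Y) Z = conv_tensor H X (conv_tensor H Y Z)"
  by (simp add: fun_eq_iff conv_tensor_def tmult_sum_left tmult_sum_right tmult_scale_left
      tmult_scale_right coassoc_sweedler tmult_assoc[OF amult_assoc])

lemma conv_tensor_unit_left: "conv_tensor H (conv_tensor_unit H) X = X"
  by (simp add: fun_eq_iff conv_tensor_def conv_tensor_unit_def tmult_scale_left
      tmult_one_left[OF amult_one_left amult_one_right] counit_sweedler_left)

lemma conv_tensor_unit_right: "conv_tensor H X (conv_tensor_unit H) = X"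
  by (simp add: fun_eq_iff conv_tensor_def conv_tensor_unit_def tmult_scale_right
      tmult_one_right[OF amult_one_left amult_one_right] counit_sweedler_right)

lemma conv_tensor_inverse_unique:
  assumes "conv_tensor H L D = conv_tensor_unit H" and "conv_tensor H D R = conv_tensor_unit H"
  shows "L = R"
  by (metis assms conv_tensor_assoc conv_tensor_unit_left conv_tensor_unit_right)

lemma Delta_antipode_left_conv_inverse:
  "conv_tensor H (\<lambda>t. aDelta H (hantip H t)) (\<lambda>t. aDelta H (bas t)) = conv_tensor_unit H"
proof (intro ext)
  fix t pq
  have "conv_tensor H (\<lambda>t. aDelta H (hantip H t)) (\<lambda>t. aDelta H (bas t)) t pq
      = aDelta H (\<lambda>k. \<Sum>i\<in>UNIV. \<Sum>j\<in>UNIV. hcomul H t i j * amult H (hantip H i) (bas j) k) pq"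
    by (simp add: conv_tensor_def aDelta_amult aDelta_sum aDelta_scale)
  also have "\<dots> = aDelta H (\<lambda>k. hcounit H t * aone H k) pq"
    by (simp only: antipode_left_bas)
  finally show "conv_tensor H (\<lambda>t. aDelta H (hantip H t)) (\<lambda>t. aDelta H (bas t)) t pq = conv_tensor_unit H t pq"
    by (simp add: aDelta_scale aDelta_one conv_tensor_unit_def)
qed

lemma antipode_Delta_op_right_conv_inverse:
  "conv_tensor H (\<lambda>t. aDelta H (bas t)) (antipode_Delta_op H) = conv_tensor_unit H"
proof (intro ext, clarify)
  fix t p q
  define A where "A a y = amult H (bas a) (hantip H y) p" for a y
  define B where "B b x = amult H (bas b) (hantip H x) q" for b x
  have "conv_tensor H (\<lambda>t. aDelta H (bas t)) (antipode_Delta_op H) t (p, q)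
      = (\<Sum>i\<in>UNIV. \<Sum>j\<in>UNIV. hcomul H t i j *
          (\<Sum>a\<in>UNIV. \<Sum>b\<in>UNIV. hcomul H i a b * (\<Sum>x\<in>UNIV. \<Sum>y\<in>UNIV. hcomul H j x y * (A a y * B b x))))"
    by (simp add: conv_tensor_def antipode_Delta_op_def aDelta_bas_expand tmult_sum_left tmult_sum_right
        tmult_scale_left tmult_scale_right tmult_tens A_def B_def sum_distrib_left)
  also have "\<dots> = (\<Sum>a\<in>UNIV. \<Sum>w\<in>UNIV. hcomul H t a w *
          (\<Sum>b\<in>UNIV. \<Sum>j\<in>UNIV. hcomul H w b j * (\<Sum>x\<in>UNIV. \<Sum>y\<in>UNIV. hcomul H j x y * (A a y * B b x))))"
    by (rule coassoc_sweedler)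
  also have "\<dots> = (\<Sum>a\<in>UNIV. \<Sum>w\<in>UNIV. hcomul H t a w *
          (\<Sum>z\<in>UNIV. \<Sum>y\<in>UNIV. hcomul H w z y * (\<Sum>b\<in>UNIV. \<Sum>x\<in>UNIV. hcomul H z b x * (A a y * B b x))))"
    by (simp only: coassoc_sweedler)
  also have "\<dots> = (\<Sum>a\<in>UNIV. \<Sum>w\<in>UNIV. hcomul H t a w *
          (\<Sum>z\<in>UNIV. \<Sum>y\<in>UNIV. hcomul H w z y * (hcounit H z * (A a y * aone H q))))"
    using antipode_right_bas[of _ q] by (simp add: B_def sum_distrib_left[symmetric] mult.left_commute)
  also have "\<dots> = (\<Sum>a\<in>UNIV. \<Sum>w\<in>UNIV. hcomul H t a w * (A a w * aone H q))"
    by (simp only: counit_sweedler_left)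
  also have "\<dots> = conv_tensor_unit H t (p, q)"
    using antipode_right_bas[of t p]
    by (simp add: A_def conv_tensor_unit_def sum_distrib_right[symmetric] mult.assoc[symmetric])
  finally show "conv_tensor H (\<lambda>t. aDelta H (bas t)) (antipode_Delta_op H) t (p, q) = conv_tensor_unit H t (p, q)" .
qed

text \<open>\<Delta> \<circ> S and (S \<otimes> S) \<circ> \<Delta>^op are a left and a right convolution inverse of \<Delta>.\<close>

lemma aDelta_hantip: "aDelta H (hantip H t) = antipode_Delta_op H t"
  using conv_tensor_inverse_unique[OF Delta_antipode_left_conv_inverse antipode_Delta_op_right_conv_inverse]
  by (simp add: fun_eq_iff)

lemma aDelta_aS:
  "aDelta H (aS H a) (i, j) = (\<Sum>x\<in>UNIV. \<Sum>y\<in>UNIV. aDelta H a (x, y) * (hantip H y i * hantip H x j))"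
proof -
  have "aDelta H (aS H a) (i, j) = (\<Sum>t\<in>UNIV. a t * aDelta H (hantip H t) (i, j))"
    by (simp add: aS_def aDelta_sum aDelta_scale)
  also have "\<dots> = (\<Sum>t\<in>UNIV. \<Sum>x\<in>UNIV. \<Sum>y\<in>UNIV. a t * hcomul H t x y * (hantip H y i * hantip H x j))"
    by (simp add: aDelta_hantip antipode_Delta_op_def sum_distrib_left mult.assoc)
  also have "\<dots> = (\<Sum>x\<in>UNIV. \<Sum>y\<in>UNIV. \<Sum>t\<in>UNIV. a t * hcomul H t x y * (hantip H y i * hantip H x j))"
    unfolding sum.cartesian_product UNIV_Times_UNIV
    by (rule sum.reindex_bij_witness[of _ "\<lambda>(x, y, t). (t, x, y)" "\<lambda>(t, x, y). (x, y, t)"]) auto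
  finally show ?thesis
    by (simp add: aDelta_def sum_distrib_right)
qed

end

section \<open>The sets T_r and T_l\<close>

locale hopf_representation =
  fixes H :: "('n::finite) hopf_data"
    and sc :: "complex \<Rightarrow> 'v \<Rightarrow> 'v::ab_group_add"
    and rep :: "'n \<Rightarrow> 'v \<Rightarrow> 'v"
    and phi :: 'v
  assumes hopf: "hopf_algebra H"
    and representation: "is_rep H sc rep"
begin

sublocale V: vector_space sc
  using representation by (simp add: is_rep_def)

abbreviation act :: "('n \<Rightarrow> complex) \<Rightarrow> 'v \<Rightarrow> 'v" where
  "act \<equiv> Pi_rep sc rep"

lemma module_hom_rep: "module_hom sc sc (rep i)"
  using representation by (simp add: is_rep_def module_hom_iff_linear)

lemma act_sum: "act (\<lambda>k. \<Sum>j\<in>J. f j k) v = (\<Sum>j\<in>J. act (f j) v)"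
  unfolding Pi_rep_def by (simp add: V.scale_sum_left sum.swap[of _ J])

lemma act_scale: "act (\<lambda>k. c * f k) v = sc c (act f v)"
  unfolding Pi_rep_def by (simp add: V.scale_sum_right)

lemma act_add: "act (\<lambda>k. f k + g k) v = act f v + act g v"
  unfolding Pi_rep_def by (simp add: V.scale_left_distrib sum.distrib)

lemma act_zero: "act (\<lambda>k. 0) v = 0"
  by (simp add: Pi_rep_def)

lemma act_scale_right: "act a (sc c v) = sc c (act a v)"
  unfolding Pi_rep_def
  by (simp add: module_hom.scale[OF module_hom_rep] V.scale_sum_right mult.commute)

lemma act_sum_right: "act a (\<Sum>k\<in>K. w k) = (\<Sum>k\<in>K. act a (w k))"
  unfolding Pi_rep_def
  by (simp add: module_hom.sum[OF module_hom_rep] V.scale_sum_right sum.swap[of _ K])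

lemma act_amult: "act (amult H a b) v = act a (act b v)"
  using representation by (simp add: is_rep_def)

lemma act_one: "act (aone H) v = v"
  using representation by (simp add: is_rep_def)

lemma sum_scale_act_bas: "(\<Sum>j\<in>UNIV. sc (a j) (act (bas j) v)) = act a v"
proof -
  have "act (bas j) v = rep j v" for j
    by (simp add: Pi_rep_def bas_def if_distrib[of "\<lambda>z. sc z _"] cong: if_cong)
  then show ?thesis
    by (simp add: Pi_rep_def)
qed

lemma mem_T_r_iff: "a \<in> T_r H sc rep phi \<longleftrightarrow> (\<forall>i. act (\<lambda>j. aDelta H a (i, j)) phi = sc (a i) phi)"
  by (simp add: T_r_def fun_eq_iff sum_scale_act_bas)

lemma mem_T_l_iff: "a \<in> T_l H sc rep phi \<longleftrightarrow> (\<forall>j. act (\<lambda>i. aDelta H a (i, j)) phi = sc (a j) phi)"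
  by (simp add: T_l_def fun_eq_iff sum_scale_act_bas)

text \<open>The elements a with a(1) \<otimes> \<Pi>(g(a(2)))\<phi> = a \<otimes> \<phi>, where g(e_j) = G j; T_r is the case g = id.\<close>

definition twisted_stabilizer :: "('n \<Rightarrow> 'n \<Rightarrow> complex) \<Rightarrow> ('n \<Rightarrow> complex) set" where
  "twisted_stabilizer G = {a. \<forall>i. (\<Sum>j\<in>UNIV. sc (aDelta H a (i, j)) (act (G j) phi)) = sc (a i) phi}"

lemma T_r_eq_twisted_stabilizer_id: "T_r H sc rep phi = twisted_stabilizer bas"
  by (simp add: T_r_def twisted_stabilizer_def fun_eq_iff)

lemma row_mem_twisted_stabilizer:
  assumes "a \<in> twisted_stabilizer G"
  shows "(\<lambda>j. aDelta H a (x, j)) \<in> twisted_stabilizer G"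
proof -
  have stab: "(\<Sum>j\<in>UNIV. sc (aDelta H a (k, j)) (act (G j) phi)) = sc (a k) phi" for k
    using assms by (simp add: twisted_stabilizer_def)
  have "(\<Sum>j\<in>UNIV. sc (aDelta H (\<lambda>j. aDelta H a (x, j)) (i, j)) (act (G j) phi))
      = sc (aDelta H a (x, i)) phi" for i
  proof -
    have "aDelta H (\<lambda>j. aDelta H a (x, j)) (i, j) = (\<Sum>k\<in>UNIV. hcomul H k x i * aDelta H a (k, j))" for j
      using aDelta_coassoc[OF hopf, of a j x i] by (simp add: aDelta_def mult.commute)
    then have "(\<Sum>j\<in>UNIV. sc (aDelta H (\<lambda>j. aDelta H a (x, j)) (i, j)) (act (G j) phi))
        = (\<Sum>k\<in>UNIV. sc (hcomul H k x i) (\<Sum>j\<in>UNIV. sc (aDelta H a (k, j)) (act (G j) phi)))"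
      by (simp add: V.scale_sum_left V.scale_sum_right V.scale_scale) (rule sum.swap)
    also have "\<dots> = sc (aDelta H a (x, i)) phi"
      by (simp only: stab) (simp add: aDelta_def V.scale_sum_left V.scale_scale mult.commute)
    finally show ?thesis .
  qed
  then show ?thesis
    by (simp add: twisted_stabilizer_def)
qed

lemma twisted_stabilizer_act:
  assumes "convolution_inverse H G F" and "b \<in> twisted_stabilizer F"
  shows "(\<Sum>j\<in>UNIV. sc (b j) (act (G j) phi)) = sc (aeps H b) phi"
proof -
  have "(\<Sum>j\<in>UNIV. sc (b j) (act (G j) phi))
      = (\<Sum>j\<in>UNIV. act (G j) (\<Sum>l\<in>UNIV. sc (aDelta H b (j, l)) (act (F l) phi)))"
    using assms(2) by (simp add: twisted_stabilizer_def act_scale_right)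
  also have "\<dots> = act (\<lambda>k. \<Sum>j\<in>UNIV. \<Sum>l\<in>UNIV. aDelta H b (j, l) * amult H (G j) (F l) k) phi"
    by (simp add: act_sum act_scale act_sum_right act_scale_right act_amult)
  also have "\<dots> = sc (aeps H b) phi"
    using assms(1) by (simp add: convolution_inverse_def act_scale act_one)
  finally show ?thesis .
qed

lemma twisted_stabilizer_subset:
  assumes "convolution_inverse H G F"
  shows "twisted_stabilizer F \<subseteq> twisted_stabilizer G"
proof
  fix a
  assume a: "a \<in> twisted_stabilizer F"
  have "(\<Sum>j\<in>UNIV. sc (aDelta H a (i, j)) (act (G j) phi)) = sc (a i) phi" for i
  proof -
    have "(\<Sum>j\<in>UNIV. sc (aDelta H a (i, j)) (act (G j) phi)) = sc (aeps H (\<lambda>j. aDelta H a (i, j))) phi"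
      by (rule twisted_stabilizer_act[OF assms row_mem_twisted_stabilizer[OF a]])
    also have "aeps H (\<lambda>j. aDelta H a (i, j)) = a i"
      using aDelta_counit_right[OF hopf] by (simp add: aeps_def)
    finally show ?thesis .
  qed
  then show "a \<in> twisted_stabilizer G"
    by (simp add: twisted_stabilizer_def)
qed

lemma T_r_eq_twisted_stabilizer_antipode: "T_r H sc rep phi = twisted_stabilizer (hantip H)"
  using twisted_stabilizer_subset[OF convolution_inverse_antipode_id[OF hopf]]
    twisted_stabilizer_subset[OF convolution_inverse_id_antipode[OF hopf]]
  by (simp add: T_r_eq_twisted_stabilizer_id)

lemma sum_scale_matrix_cancel:
  fixes M N :: "'n \<Rightarrow> 'n \<Rightarrow> complex"
  assumes inverse: "\<And>x z. (\<Sum>j\<in>UNIV. M x j * N j z) = bas x z"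
    and eq: "\<And>j. (\<Sum>x\<in>UNIV. sc (M x j) (w x)) = (\<Sum>x\<in>UNIV. sc (M x j) (w' x))"
  shows "w = w'"
proof
  fix z
  have unfold: "u z = (\<Sum>j\<in>UNIV. sc (N j z) (\<Sum>x\<in>UNIV. sc (M x j) (u x)))" for u
  proof -
    have "u z = (\<Sum>x\<in>UNIV. sc (\<Sum>j\<in>UNIV. M x j * N j z) (u x))"
      by (simp add: inverse bas_def if_distrib[of "\<lambda>c. sc c _"] cong: if_cong)
    also have "\<dots> = (\<Sum>j\<in>UNIV. sc (N j z) (\<Sum>x\<in>UNIV. sc (M x j) (u x)))"
      by (simp add: V.scale_sum_left V.scale_sum_right V.scale_scale mult.commute) (rule sum.swap)
    finally show ?thesis .
  qed
  show "w z = w' z"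
    by (subst (1 2) unfold) (simp add: eq)
qed

lemma T_r_stabilizes: "stabilizes H sc rep phi (T_r H sc rep phi)"
  unfolding stabilizes_def
proof
  fix a
  assume a: "a \<in> T_r H sc rep phi"
  have "act a phi = act (\<lambda>j. \<Sum>i\<in>UNIV. hcounit H i * aDelta H a (i, j)) phi"
    by (simp add: aDelta_counit_left[OF hopf])
  also have "\<dots> = (\<Sum>i\<in>UNIV. sc (hcounit H i) (sc (a i) phi))"
    using a by (simp add: mem_T_r_iff act_sum act_scale)
  finally have "act a phi = (\<Sum>i\<in>UNIV. sc (hcounit H i) (sc (a i) phi))" .
  then show "act a phi = sc (aeps H a) phi"
    by (simp add: aeps_def V.scale_sum_left V.scale_scale mult.commute)
qed

lemma amult_mem_T_r:
  assumes a: "a \<in> T_r H sc rep phi" and b: "b \<in> T_r H sc rep phi"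
  shows "amult H a b \<in> T_r H sc rep phi"
  unfolding mem_T_r_iff
proof
  fix i
  have "act (\<lambda>j. aDelta H (amult H a b) (i, j)) phi
      = (\<Sum>p\<in>UNIV. \<Sum>p'\<in>UNIV. sc (hmul H p p' i)
          (act (\<lambda>q. aDelta H a (p, q)) (act (\<lambda>q. aDelta H b (p', q)) phi)))"
    by (simp add: aDelta_amult[OF hopf] tmult_row act_sum act_scale act_amult)
  also have "\<dots> = (\<Sum>p\<in>UNIV. \<Sum>p'\<in>UNIV. sc (hmul H p p' i) (sc (b p') (sc (a p) phi)))"
    using a b by (simp add: mem_T_r_iff act_scale_right)
  also have "\<dots> = sc (amult H a b i) phi"
    by (simp add: amult_def V.scale_sum_left V.scale_scale mult_ac)
  finally show "act (\<lambda>j. aDelta H (amult H a b) (i, j)) phi = sc (amult H a b i) phi" .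
qed

lemma subalgebra_T_r: "subalgebra H (T_r H sc rep phi)"
proof -
  have "(\<lambda>_. 0) \<in> T_r H sc rep phi"
    by (simp add: mem_T_r_iff aDelta_def act_zero)
  moreover have "(\<lambda>i. a i + b i) \<in> T_r H sc rep phi"
    if "a \<in> T_r H sc rep phi" "b \<in> T_r H sc rep phi" for a b
    using that by (simp add: mem_T_r_iff aDelta_def distrib_right sum.distrib act_add V.scale_left_distrib)
  moreover have "(\<lambda>i. c * a i) \<in> T_r H sc rep phi" if "a \<in> T_r H sc rep phi" for c a
    using that by (simp add: mem_T_r_iff aDelta_scale act_scale)
  moreover have "aone H \<in> T_r H sc rep phi"
    by (simp add: mem_T_r_iff aDelta_one[OF hopf] act_scale act_one)
  ultimately show ?thesis
    using amult_mem_T_r by (simp add: subalgebra_def)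
qed

lemma subset_T_r_if_stabilizes:
  assumes coproduct: "\<forall>a\<in>B. aDelta H a \<in> tensor_sq B" and stab: "stabilizes H sc rep phi B"
  shows "B \<subseteq> T_r H sc rep phi"
proof
  fix a
  assume "a \<in> B"
  then obtain M c f g where fg: "\<forall>l<(M::nat). f l \<in> B \<and> g l \<in> B"
    and dec: "aDelta H a = (\<lambda>pq. \<Sum>l<M. c l * tens (f l) (g l) pq)"
    using coproduct unfolding tensor_sq_def by blast
  have "act (\<lambda>j. aDelta H a (i, j)) phi = sc (a i) phi" for i
  proof -
    have "act (\<lambda>j. aDelta H a (i, j)) phi = (\<Sum>l<M. sc (c l) (sc (f l i) (act (g l) phi)))"
      by (simp add: dec act_sum act_scale)
    also have "\<dots> = (\<Sum>l<M. sc (c l * f l i * aeps H (g l)) phi)"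
      using fg stab by (intro sum.cong) (auto simp: stabilizes_def V.scale_scale)
    also have "\<dots> = sc (\<Sum>j\<in>UNIV. aDelta H a (i, j) * hcounit H j) phi"
      by (simp add: dec aeps_def V.scale_sum_left sum_distrib_left sum_distrib_right mult_ac sum.swap[of _ "{..<M}"])
    finally show ?thesis
      by (simp add: aDelta_counit_right[OF hopf])
  qed
  then show "a \<in> T_r H sc rep phi"
    by (simp add: mem_T_r_iff)
qed

lemma column_mem_T_l:
  assumes "a \<in> T_l H sc rep phi"
  shows "(\<lambda>i. aDelta H a (i, y)) \<in> T_l H sc rep phi"
  unfolding mem_T_l_iff
proof
  fix j
  have "aDelta H (\<lambda>i. aDelta H a (i, y)) (i, j) = (\<Sum>k\<in>UNIV. hcomul H k j y * aDelta H a (i, k))" for i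
    using aDelta_coassoc[OF hopf, of a y i j] by (simp add: aDelta_def mult.commute)
  then have "act (\<lambda>i. aDelta H (\<lambda>i. aDelta H a (i, y)) (i, j)) phi = (\<Sum>k\<in>UNIV. sc (hcomul H k j y) (sc (a k) phi))"
    using assms by (simp add: mem_T_l_iff act_sum act_scale)
  also have "\<dots> = sc (aDelta H a (j, y)) phi"
    by (simp add: aDelta_def V.scale_sum_left V.scale_scale mult.commute)
  finally show "act (\<lambda>i. aDelta H (\<lambda>i. aDelta H a (i, y)) (i, j)) phi = sc (aDelta H a (j, y)) phi" .
qed

lemma aDelta_mem_tensor_sq_T_r:
  assumes eq: "T_r H sc rep phi = T_l H sc rep phi" and a: "a \<in> T_r H sc rep phi"
  shows "aDelta H a \<in> tensor_sq (T_r H sc rep phi)"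
proof (rule mem_tensor_sq_of_rows_cols)
  show "(\<lambda>_. 0) \<in> T_r H sc rep phi"
    and "\<forall>a\<in>T_r H sc rep phi. \<forall>b\<in>T_r H sc rep phi. (\<lambda>i. a i + b i) \<in> T_r H sc rep phi"
    and "\<forall>c. \<forall>a\<in>T_r H sc rep phi. (\<lambda>i. c * a i) \<in> T_r H sc rep phi"
    using subalgebra_T_r by (simp_all add: subalgebra_def)
  show "(\<lambda>j. aDelta H a (i, j)) \<in> T_r H sc rep phi" for i
    using row_mem_twisted_stabilizer a by (simp add: T_r_eq_twisted_stabilizer_id)
  show "(\<lambda>i. aDelta H a (i, j)) \<in> T_r H sc rep phi" for j
    using column_mem_T_l a by (simp add: eq)
qed

end

locale involutive_hopf_representation = hopf_representation +
  assumes involutive: "\<forall>a. aS H (aS H a) = a"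
begin

lemma aS_mem_T_l_iff: "aS H b \<in> T_l H sc rep phi \<longleftrightarrow> b \<in> twisted_stabilizer (hantip H)"
proof -
  define w where "w x = (\<Sum>y\<in>UNIV. sc (aDelta H b (x, y)) (act (hantip H y) phi))" for x
  have "(\<lambda>i. aDelta H (aS H b) (i, j))
      = (\<lambda>i. \<Sum>x\<in>UNIV. \<Sum>y\<in>UNIV. (hantip H x j * aDelta H b (x, y)) * hantip H y i)" for j
    by (simp add: aDelta_aS[OF hopf] fun_eq_iff mult_ac)
  then have column: "act (\<lambda>i. aDelta H (aS H b) (i, j)) phi = (\<Sum>x\<in>UNIV. sc (hantip H x j) (w x))" for j
    by (simp add: w_def act_sum act_scale V.scale_sum_right V.scale_scale)
  have entry: "sc (aS H b j) phi = (\<Sum>x\<in>UNIV. sc (hantip H x j) (sc (b x) phi))" for j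
    by (simp add: aS_def V.scale_sum_left V.scale_scale mult.commute)
  have inverse: "(\<Sum>j\<in>UNIV. hantip H x j * hantip H j z) = bas x z" for x z
  proof -
    have "aS H (hantip H x) = bas x"
      using involutive aS_bas by metis
    then show ?thesis
      by (simp add: aS_def fun_eq_iff)
  qed
  have "aS H b \<in> T_l H sc rep phi
      \<longleftrightarrow> (\<forall>j. (\<Sum>x\<in>UNIV. sc (hantip H x j) (w x)) = (\<Sum>x\<in>UNIV. sc (hantip H x j) (sc (b x) phi)))"
    by (simp add: mem_T_l_iff column entry)
  also have "\<dots> \<longleftrightarrow> w = (\<lambda>x. sc (b x) phi)"
    using sum_scale_matrix_cancel[OF inverse] by auto
  also have "\<dots> \<longleftrightarrow> b \<in> twisted_stabilizer (hantip H)"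
    by (simp add: twisted_stabilizer_def w_def fun_eq_iff)
  finally show ?thesis .
qed

lemma aS_mem_T_l: "a \<in> T_r H sc rep phi \<Longrightarrow> aS H a \<in> T_l H sc rep phi"
  by (simp add: aS_mem_T_l_iff T_r_eq_twisted_stabilizer_antipode)

lemma aS_mem_T_r: "a \<in> T_l H sc rep phi \<Longrightarrow> aS H a \<in> T_r H sc rep phi"
  using aS_mem_T_l_iff[of "aS H a"] involutive by (simp add: T_r_eq_twisted_stabilizer_antipode)

lemma T_r_eq_T_l_iff: "T_r H sc rep phi = T_l H sc rep phi \<longleftrightarrow> T_l H sc rep phi \<subseteq> T_r H sc rep phi"
proof
  assume sub: "T_l H sc rep phi \<subseteq> T_r H sc rep phi"
  show "T_r H sc rep phi = T_l H sc rep phi"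
  proof
    show "T_r H sc rep phi \<subseteq> T_l H sc rep phi"
    proof
      fix a
      assume "a \<in> T_r H sc rep phi"
      then have "aS H (aS H a) \<in> T_l H sc rep phi"
        using sub aS_mem_T_l by blast
      then show "a \<in> T_l H sc rep phi"
        using involutive by simp
    qed
  qed (rule sub)
qed simp

lemma T_l_subset_T_r_iff:
  "T_l H sc rep phi \<subseteq> T_r H sc rep phi \<longleftrightarrow> (\<forall>a\<in>T_r H sc rep phi. aS H a \<in> T_r H sc rep phi)"
proof
  assume "T_l H sc rep phi \<subseteq> T_r H sc rep phi"
  then show "\<forall>a\<in>T_r H sc rep phi. aS H a \<in> T_r H sc rep phi"
    using aS_mem_T_l by blast
next
  assume closed: "\<forall>a\<in>T_r H sc rep phi. aS H a \<in> T_r H sc rep phi"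
  show "T_l H sc rep phi \<subseteq> T_r H sc rep phi"
  proof
    fix a
    assume "a \<in> T_l H sc rep phi"
    then have "aS H (aS H a) \<in> T_r H sc rep phi"
      using closed aS_mem_T_r by blast
    then show "a \<in> T_r H sc rep phi"
      using involutive by simp
  qed
qed

lemma hopf_subalgebra_T_r_if_eq:
  assumes "T_r H sc rep phi = T_l H sc rep phi"
  shows "hopf_subalgebra H (T_r H sc rep phi)"
  using assms subalgebra_T_r aDelta_mem_tensor_sq_T_r aS_mem_T_l by (simp add: hopf_subalgebra_def)

end

theorem proposition1:
  fixes H :: "('n::finite) hopf_data"
    and sc :: "complex \<Rightarrow> 'v \<Rightarrow> ('v::ab_group_add)"
    and rep :: "'n \<Rightarrow> 'v \<Rightarrow> 'v"
    and phi :: 'v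
    and T :: "('n \<Rightarrow> complex) set"
  assumes "hopf_algebra H"
    and "\<forall>a. aS H (aS H a) = a"
    and "is_rep H sc rep"
    and "is_largest_stab_hopf H sc rep phi T"
  shows "(T_r H sc rep phi = T_l H sc rep phi \<longleftrightarrow> hopf_subalgebra H (T_r H sc rep phi))
       \<and> (hopf_subalgebra H (T_r H sc rep phi) \<longleftrightarrow> T_r H sc rep phi = T)
       \<and> (T_r H sc rep phi = T \<longleftrightarrow> T_l H sc rep phi \<subseteq> T_r H sc rep phi)"
proof -
  interpret involutive_hopf_representation H sc rep phi
    using assms(1-3) by unfold_locales
  have T: "hopf_subalgebra H T" "stabilizes H sc rep phi T"
    "\<And>B. hopf_subalgebra H B \<Longrightarrow> stabilizes H sc rep phi B \<Longrightarrow> B \<subseteq> T"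
    using assms(4) by (auto simp: is_largest_stab_hopf_def)
  have "T \<subseteq> T_r H sc rep phi"
    using T(1,2) subset_T_r_if_stabilizes by (simp add: hopf_subalgebra_def)
  then have "hopf_subalgebra H (T_r H sc rep phi) \<longleftrightarrow> T_r H sc rep phi = T"
    using T(1,3) T_r_stabilizes by blast
  moreover have "T_r H sc rep phi = T \<Longrightarrow> T_l H sc rep phi \<subseteq> T_r H sc rep phi"
    using T(1) T_l_subset_T_r_iff by (simp add: hopf_subalgebra_def)
  ultimately show ?thesis
    using hopf_subalgebra_T_r_if_eq T_r_eq_T_l_iff by blast
qed

end
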